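(* Let $\mathcal D$ be any family of dependency notions and let $\phi\in\mathbf{FO}(\mathcal D,[\cdot])$. Then $\phi$ is logically equivalent to some formula of the form $\bigwedge_i[\theta_i]\wedge\psi$, where the $\theta_i$ are first-order sentences and $\psi\in\mathbf{FO}(\mathcal D)$.
   Context: Team semantics (lax version). For a structure $\mathfrak M$ with domain $M$, a team $X$ is a (possibly empty) set of assignments $s:V\to M$, $V$ a finite set of variables; $X(\vec v)=\{s(\vec v):s\in X\}$. Satisfaction for formulas in negation normal form: first-order literal $\alpha$: every $s\in X$ satisfies $\alpha$ (Tarski); $\psi\vee\theta$: $X=Y\cup Z$ with $\mathfrak M\models_Y\psi$, $\mathfrak M\models_Z\theta$; $\psi\wedge\theta$: both; $\exists v\psi$: some $F:X\to\mathcal P(M)\setminus\{\emptyset\}$ with $\mathfrak M\models_{X[F/v]}\psi$, $X[F/v]=\{s[m/v]:s\in X,m\in F(s)\}$; $\forall v\psi$: $\mathfrak M\models_{X[M/v]}\psi$, $X[M/v]=\{s[m/v]:s\in X,m\in M\}$. A $k$-ary dependency notion $\mathbf D$ is an isomorphism-closed class of structures $(M,R)$, $R$ $k$-ary; $\mathfrak M\models_X\mathbf D\vec v$ iff $(M,X(\vec v))\in\mathbf D$. For a first-order sentence $\theta$ in the signature of $\mathfrak M$, $\mathfrak M\models_X[\theta]$ iff $\mathfrak M\models\theta$ in Tarski semantics. $\mathbf{FO}(\mathcal D,[\cdot])$ is first-order logic in negation normal form extended with the atoms of $\mathcal D$ and the operator $[\cdot]$. Two formulas are equivalent if satisfied by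 the same teams in all structures. *)

theory Defs
  imports Main
begin

datatype ('f, 'v) trm = Var 'v | Fn 'f "('f, 'v) trm list"

text \<open>Formulas of FO(D,[.]) in negation normal form.
  Lit True r ts is the atom r(ts), Lit False r ts its negation;
  Eq True t u is t = u, Eq False t u is its negation;
  Dep d vs is the dependency atom D_d applied to the variable tuple vs;
  Br th is the operator [th].\<close>
datatype ('f, 'r, 'd, 'v) fm =
    Lit bool 'r "('f, 'v) trm list"
  | Eq bool "('f, 'v) trm" "('f, 'v) trm"
  | Dep 'd "'v list"
  | Br "('f, 'r, 'd, 'v) fm"
  | FOr "('f, 'r, 'd, 'v) fm" "('f, 'r, 'd, 'v) fm"
  | FAnd "('f, 'r, 'd, 'v) fm" "('f, 'r, 'd, 'v) fm"
  | FEx 'v "('f, 'r, 'd, 'v) fm"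
  | FAll 'v "('f, 'r, 'd, 'v) fm"

fun tvars :: "('f, 'v) trm \<Rightarrow> 'v set" where
  "tvars (Var v) = {v}"
| "tvars (Fn f ts) = (\<Union>t\<in>set ts. tvars t)"

primrec fv :: "('f, 'r, 'd, 'v) fm \<Rightarrow> 'v set" where
  "fv (Lit b r ts) = (\<Union>t\<in>set ts. tvars t)"
| "fv (Eq b t u) = tvars t \<union> tvars u"
| "fv (Dep d vs) = set vs"
| "fv (Br th) = {}"
| "fv (FOr p q) = fv p \<union> fv q"
| "fv (FAnd p q) = fv p \<union> fv q"
| "fv (FEx v p) = fv p - {v}"
| "fv (FAll v p) = fv p - {v}"

primrec is_fo :: "('f, 'r, 'd, 'v) fm \<Rightarrow> bool" where
  "is_fo (Lit b r ts) = True"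
| "is_fo (Eq b t u) = True"
| "is_fo (Dep d vs) = False"
| "is_fo (Br th) = False"
| "is_fo (FOr p q) = (is_fo p \<and> is_fo q)"
| "is_fo (FAnd p q) = (is_fo p \<and> is_fo q)"
| "is_fo (FEx v p) = is_fo p"
| "is_fo (FAll v p) = is_fo p"

definition is_fo_sentence :: "('f, 'r, 'd, 'v) fm \<Rightarrow> bool" where
  "is_fo_sentence th \<longleftrightarrow> is_fo th \<and> fv th = {}"

primrec no_br :: "('f, 'r, 'd, 'v) fm \<Rightarrow> bool" where
  "no_br (Lit b r ts) = True"
| "no_br (Eq b t u) = True"
| "no_br (Dep d vs) = True"
| "no_br (Br th) = False"
| "no_br (FOr p q) = (no_br p \<and> no_br q)"
| "no_br (FAnd p q) = (no_br p \<and> no_br q)"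
| "no_br (FEx v p) = no_br p"
| "no_br (FAll v p) = no_br p"

primrec wff :: "('d \<Rightarrow> nat) \<Rightarrow> ('f, 'r, 'd, 'v) fm \<Rightarrow> bool" where
  "wff ar (Lit b r ts) = True"
| "wff ar (Eq b t u) = True"
| "wff ar (Dep d vs) = (length vs = ar d)"
| "wff ar (Br th) = is_fo_sentence th"
| "wff ar (FOr p q) = (wff ar p \<and> wff ar q)"
| "wff ar (FAnd p q) = (wff ar p \<and> wff ar q)"
| "wff ar (FEx v p) = wff ar p"
| "wff ar (FAll v p) = wff ar p"

definition big_conj :: "('f, 'r, 'd, 'v) fm list \<Rightarrow> ('f, 'r, 'd, 'v) fm \<Rightarrow> ('f, 'r, 'd, 'v) fm" where
  "big_conj ths psi = foldr (\<lambda>th acc. FAnd (Br th) acc) ths psi"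

type_synonym ('m, 'f, 'r) struct = "'m set \<times> ('f \<Rightarrow> 'm list \<Rightarrow> 'm) \<times> ('r \<Rightarrow> 'm list \<Rightarrow> bool)"

definition dom_of :: "('m, 'f, 'r) struct \<Rightarrow> 'm set" where "dom_of S = fst S"
definition fun_of :: "('m, 'f, 'r) struct \<Rightarrow> 'f \<Rightarrow> 'm list \<Rightarrow> 'm" where "fun_of S = fst (snd S)"
definition rel_of :: "('m, 'f, 'r) struct \<Rightarrow> 'r \<Rightarrow> 'm list \<Rightarrow> bool" where "rel_of S = snd (snd S)"

definition is_struct :: "('m, 'f, 'r) struct \<Rightarrow> bool" where
  "is_struct S \<longleftrightarrow> dom_of S \<noteq> {} \<and>
     (\<forall>f xs. set xs \<subseteq> dom_of S \<longrightarrow> fun_of S f xs \<in> dom_of S)"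

text \<open>A family of dependency notions indexed by 'd: D d is a class of structures (M,R)
  with R an (ar d)-ary relation on M, closed under isomorphism.\<close>
definition dep_family :: "('d \<Rightarrow> nat) \<Rightarrow> ('d \<Rightarrow> 'm set \<Rightarrow> 'm list set \<Rightarrow> bool) \<Rightarrow> bool" where
  "dep_family ar D \<longleftrightarrow>
     (\<forall>d M R. D d M R \<longrightarrow> (\<forall>t\<in>R. length t = ar d \<and> set t \<subseteq> M)) \<and>
     (\<forall>d M R M' h. bij_betw h M M' \<longrightarrow> (\<forall>t\<in>R. length t = ar d \<and> set t \<subseteq> M) \<longrightarrow>
         (D d M R \<longleftrightarrow> D d M' (map h ` R)))"

fun eval :: "('m, 'f, 'r) struct \<Rightarrow> ('v \<Rightarrow> 'm) \<Rightarrow> ('f, 'v) trm \<Rightarrow> 'm" where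
  "eval S s (Var v) = s v"
| "eval S s (Fn f ts) = fun_of S f (map (eval S s) ts)"

text \<open>Tarski semantics (only meaningful for first-order formulas).\<close>
primrec tarski :: "('f, 'r, 'd, 'v) fm \<Rightarrow> ('m, 'f, 'r) struct \<Rightarrow> ('v \<Rightarrow> 'm) \<Rightarrow> bool" where
  "tarski (Lit b r ts) S s = (rel_of S r (map (eval S s) ts) = b)"
| "tarski (Eq b t u) S s = ((eval S s t = eval S s u) = b)"
| "tarski (Dep d vs) S s = False"
| "tarski (Br th) S s = False"
| "tarski (FOr p q) S s = (tarski p S s \<or> tarski q S s)"
| "tarski (FAnd p q) S s = (tarski p S s \<and> tarski q S s)"
| "tarski (FEx v p) S s = (\<exists>m\<in>dom_of S. tarski p S (s(v := m)))"
| "tarski (FAll v p) S s = (\<forall>m\<in>dom_of S. tarski p S (s(v := m)))"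

definition assigns :: "('m, 'f, 'r) struct \<Rightarrow> ('v \<Rightarrow> 'm) set" where
  "assigns S = {s. \<forall>v. s v \<in> dom_of S}"

definition models :: "('m, 'f, 'r) struct \<Rightarrow> ('f, 'r, 'd, 'v) fm \<Rightarrow> bool" where
  "models S th \<longleftrightarrow> (\<forall>s\<in>assigns S. tarski th S s)"

text \<open>Lax team semantics.\<close>
primrec tsat :: "('d \<Rightarrow> 'm set \<Rightarrow> 'm list set \<Rightarrow> bool) \<Rightarrow> ('f, 'r, 'd, 'v) fm \<Rightarrow>
    ('m, 'f, 'r) struct \<Rightarrow> ('v \<Rightarrow> 'm) set \<Rightarrow> bool" where
  "tsat D (Lit b r ts) S X = (\<forall>s\<in>X. rel_of S r (map (eval S s) ts) = b)"
| "tsat D (Eq b t u) S X = (\<forall>s\<in>X. (eval S s t = eval S s u) = b)"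
| "tsat D (Dep d vs) S X = D d (dom_of S) ((\<lambda>s. map s vs) ` X)"
| "tsat D (Br th) S X = models S th"
| "tsat D (FOr p q) S X = (\<exists>Y Z. X = Y \<union> Z \<and> tsat D p S Y \<and> tsat D q S Z)"
| "tsat D (FAnd p q) S X = (tsat D p S X \<and> tsat D q S X)"
| "tsat D (FEx v p) S X = (\<exists>F. (\<forall>s\<in>X. F s \<subseteq> dom_of S \<and> F s \<noteq> {}) \<and>
        tsat D p S {s(v := m) | s m. s \<in> X \<and> m \<in> F s})"
| "tsat D (FAll v p) S X = tsat D p S {s(v := m) | s m. s \<in> X \<and> m \<in> dom_of S}"

definition equivalent :: "('d \<Rightarrow> 'm set \<Rightarrow> 'm list set \<Rightarrow> bool) \<Rightarrow>
    ('f, 'r, 'd, 'v) fm \<Rightarrow> ('f, 'r, 'd, 'v) fm \<Rightarrow> bool" where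
  "equivalent D p q \<longleftrightarrow>
     (\<forall>S X. is_struct S \<longrightarrow> X \<subseteq> assigns S \<longrightarrow> (tsat D p S X \<longleftrightarrow> tsat D q S X))"

end

theory Submission
  imports Defs
begin

text \<open>Whether a team satisfies [\<theta>] does not depend on the team, only on whether the
  structure is a model of \<theta>. Hence this truth value factors out of every connective and
  quantifier (for \<or> and \<exists> the chosen split of the team, resp. the chosen supplementing
  function, is unaffected), so a formula is equivalent to the conjunction of all its bracketed
  sentences with the formula obtained by replacing each [\<theta>] by a tautology.\<close>

primrec bracketed :: "('f, 'r, 'd, 'v) fm \<Rightarrow> ('f, 'r, 'd, 'v) fm list" where
  "bracketed (Lit b r ts) = []"
| "bracketed (Eq b t u) = []"
| "bracketed (Dep d vs) = []"
| "bracketed (Br th) = [th]"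
| "bracketed (FOr p q) = bracketed p @ bracketed q"
| "bracketed (FAnd p q) = bracketed p @ bracketed q"
| "bracketed (FEx v p) = bracketed p"
| "bracketed (FAll v p) = bracketed p"

definition fm_true :: "('f, 'r, 'd, 'v) fm" where
  "fm_true = Eq True (Var undefined) (Var undefined)"

primrec drop_brackets :: "('f, 'r, 'd, 'v) fm \<Rightarrow> ('f, 'r, 'd, 'v) fm" where
  "drop_brackets (Lit b r ts) = Lit b r ts"
| "drop_brackets (Eq b t u) = Eq b t u"
| "drop_brackets (Dep d vs) = Dep d vs"
| "drop_brackets (Br th) = fm_true"
| "drop_brackets (FOr p q) = FOr (drop_brackets p) (drop_brackets q)"
| "drop_brackets (FAnd p q) = FAnd (drop_brackets p) (drop_brackets q)"
| "drop_brackets (FEx v p) = FEx v (drop_brackets p)"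
| "drop_brackets (FAll v p) = FAll v (drop_brackets p)"

lemma tsat_fm_true [simp]: "tsat D fm_true S X"
  by (simp add: fm_true_def)

lemma no_br_fm_true [simp]: "no_br fm_true"
  and wff_fm_true [simp]: "wff ar fm_true"
  by (simp_all add: fm_true_def)

lemma no_br_drop_brackets: "no_br (drop_brackets p)"
  by (induction p) simp_all

lemma wff_drop_brackets: "wff ar p \<Longrightarrow> wff ar (drop_brackets p)"
  by (induction p) simp_all

lemma wff_bracketed_fo_sentence:
  "wff ar p \<Longrightarrow> th \<in> set (bracketed p) \<Longrightarrow> is_fo_sentence th"
  by (induction p) auto

lemma tsat_iff_bracketed_drop_brackets:
  "tsat D p S X \<longleftrightarrow> (\<forall>th\<in>set (bracketed p). models S th) \<and> tsat D (drop_brackets p) S X"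
proof (induction p arbitrary: X)
  case (FOr p q)
  then show ?case by (simp, blast)
next
  case (FEx v p)
  then show ?case by auto
qed auto

lemma tsat_big_conj:
  "tsat D (big_conj ths psi) S X \<longleftrightarrow> (\<forall>th\<in>set ths. models S th) \<and> tsat D psi S X"
  by (induction ths) (auto simp: big_conj_def)

lemma equivalent_big_conj_bracketed:
  "equivalent D p (big_conj (bracketed p) (drop_brackets p))"
  by (simp add: equivalent_def tsat_big_conj tsat_iff_bracketed_drop_brackets[of D p])

theorem mainTheorem13:
  fixes ar :: "'d \<Rightarrow> nat"
    and D :: "'d \<Rightarrow> 'm set \<Rightarrow> 'm list set \<Rightarrow> bool"
    and phi :: "('f, 'r, 'd, 'v) fm"
  assumes "dep_family ar D"
    and "wff ar phi"
  shows "\<exists>ths psi. (\<forall>th\<in>set ths. is_fo_sentence th) \<and> no_br psi \<and> wff ar psi \<and>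
           equivalent D phi (big_conj ths psi)"
proof (intro exI conjI)
  show "\<forall>th\<in>set (bracketed phi). is_fo_sentence th"
    using wff_bracketed_fo_sentence assms(2) by blast
  show "no_br (drop_brackets phi)"
    by (rule no_br_drop_brackets)
  show "wff ar (drop_brackets phi)"
    using assms(2) by (rule wff_drop_brackets)
  show "equivalent D phi (big_conj (bracketed phi) (drop_brackets phi))"
    by (rule equivalent_big_conj_bracketed)
qed

end
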